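(* Let $\bar{\mathcal S}=\{f:\exists\,h,z\text{ with }((f,h),z)\in\mathcal S\}$ and $\bar{\mathcal Q}=\{f:\exists\,w\text{ with }(f,w)\in\mathcal Q\}$. Then $\bar{\mathcal S}=\bar{\mathcal Q}$; consequently, minimizing any linear function $\Lambda f^T$ over $\mathcal S$ is equivalent to minimizing it over $\mathcal Q$.
   Context: Let $R$ be a finite ring with $q$ elements, $R^-=R\setminus\{0\}$, $\mathcal H$ an $m\times n$ matrix over $R$, $\mathcal I=\{1,\dots,n\}$, $\mathcal J=\{1,\dots,m\}$. For any $r\times N$ matrix $\mathcal A$ over $R$ with rows indexed by $\rho$, let $\mathcal C_\rho(\mathcal A)=\{g\in R^{\mathrm{supp}(\mathcal A_\rho)}:\sum_ig_i\mathcal A_{\rho,i}=0\}$ and let $\mathcal Q(\mathcal A)$ be the set of $(F,W)$, $F=(F_i^{(\alpha)})_{i\le N,\alpha\in R^-}$ real, $W=(W_{\rho,g})_{\rho,g\in\mathcal C_\rho(\mathcal A)}$ real, with $W_{\rho,g}\ge0$, $\sum_gW_{\rho,g}=1$ for each $\rho$, and $F_i^{(\alpha)}=\sum_{g\in\mathcal C_\rho(\mathcal A),g_i=\alpha}W_{\rho,g}$ for all $\rho$, $i\in\mathrm{supp}(\mathcal A_\rho)$, $\alpha\in R^-$. Let $\mathcal Q=\mathcal Q(\mathcal H)$, with points written $(f,w)$, $f\in\mathbb R^{(q-1)n}$. For each $j\in\mathcal J$ let $\mathcal I_j=\{i:\mathcal H_{j,i}\ne0\}=\{i_1,\dots,i_{d_j}\}$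 in a fixed order, with $d_j\ge4$, and introduce new variables $\chi^j_1,\dots,\chi^j_{d_j-3}$. Let $\mathcal F$ be the $\big(\sum_j(d_j-2)\big)\times\big(n+\sum_j(d_j-3)\big)$ matrix over $R$, acting on vectors $(c\mid\chi)$ with $c\in R^n$ and $\chi=(\chi^j)_{j\in\mathcal J}$, whose rows express, for every $j\in\mathcal J$, the equations $c_{i_1}\mathcal H_{j,i_1}+c_{i_2}\mathcal H_{j,i_2}+\chi^j_1=0$; $-\chi^j_\ell+c_{i_{\ell+2}}\mathcal H_{j,i_{\ell+2}}+\chi^j_{\ell+1}=0$ for $\ell=1,\dots,d_j-4$; $-\chi^j_{d_j-3}+c_{i_{d_j-1}}\mathcal H_{j,i_{d_j-1}}+c_{i_{d_j}}\mathcal H_{j,i_{d_j}}=0$. Let $\mathcal S=\mathcal Q(\mathcal F)$, with points written $((f,h),z)$ where $f\in\mathbb R^{(q-1)n}$ collects the $F$-coordinates for the $c$-positions and $h$ those for the $\chi$-positions. *)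

theory Defs
  imports Complex_Main
begin

text \<open>A matrix A over a ring is a function row => column => 'r, together with an
explicit (finite) set of rows and columns.  Vectors g in R^supp(A_rho) are
represented as functions that vanish outside supp(A_rho).\<close>

definition row_supp :: "('row \<Rightarrow> 'col \<Rightarrow> 'r::ring_1) \<Rightarrow> 'col set \<Rightarrow> 'row \<Rightarrow> 'col set" where
  "row_supp A Cols \<rho> = {i \<in> Cols. A \<rho> i \<noteq> 0}"

definition local_code :: "('row \<Rightarrow> 'col \<Rightarrow> 'r::ring_1) \<Rightarrow> 'col set \<Rightarrow> 'row \<Rightarrow> ('col \<Rightarrow> 'r) set" where
  "local_code A Cols \<rho> =
     {g. (\<forall>i. i \<notin> row_supp A Cols \<rho> \<longrightarrow> g i = 0) \<and>
         (\<Sum>i\<in>row_supp A Cols \<rho>. g i * A \<rho> i) = 0}"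

text \<open>The polytope Q(A): pairs (F,W); coordinates outside the index ranges are fixed to 0.\<close>
definition polytopeQ ::
  "('row \<Rightarrow> 'col \<Rightarrow> 'r::ring_1) \<Rightarrow> 'row set \<Rightarrow> 'col set \<Rightarrow>
   (('col \<Rightarrow> 'r \<Rightarrow> real) \<times> ('row \<Rightarrow> ('col \<Rightarrow> 'r) \<Rightarrow> real)) set" where
  "polytopeQ A Rows Cols =
    {(F, W).
       (\<forall>i \<alpha>. (i \<notin> Cols \<or> \<alpha> = 0) \<longrightarrow> F i \<alpha> = 0) \<and>
       (\<forall>\<rho> g. (\<rho> \<notin> Rows \<or> g \<notin> local_code A Cols \<rho>) \<longrightarrow> W \<rho> g = 0) \<and>
       (\<forall>\<rho>\<in>Rows. (\<forall>g\<in>local_code A Cols \<rho>. W \<rho> g \<ge> 0) \<and>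
                   (\<Sum>g\<in>local_code A Cols \<rho>. W \<rho> g) = 1) \<and>
       (\<forall>\<rho>\<in>Rows. \<forall>i\<in>row_supp A Cols \<rho>. \<forall>\<alpha>. \<alpha> \<noteq> 0 \<longrightarrow>
          F i \<alpha> = (\<Sum>g\<in>{g \<in> local_code A Cols \<rho>. g i = \<alpha>}. W \<rho> g))}"

definition Iset :: "(nat \<Rightarrow> nat \<Rightarrow> 'r::ring_1) \<Rightarrow> nat \<Rightarrow> nat \<Rightarrow> nat set" where
  "Iset H n j = {i \<in> {1..n}. H j i \<noteq> 0}"

definition deg :: "(nat \<Rightarrow> nat \<Rightarrow> 'r::ring_1) \<Rightarrow> nat \<Rightarrow> nat \<Rightarrow> nat" where
  "deg H n j = card (Iset H n j)"

text \<open>Columns: Inl i is c_i (i in 1..n), Inr (j,l) is chi^j_l (l in 1..d_j-3).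
  Rows: (j,k), k in 1..d_j-2, the k-th equation of check j.
  pos j k = i_k, the k-th element of I_j in the chosen order.\<close>
definition F_rows :: "(nat \<Rightarrow> nat \<Rightarrow> 'r::ring_1) \<Rightarrow> nat \<Rightarrow> nat \<Rightarrow> (nat \<times> nat) set" where
  "F_rows H m n = {(j, k). j \<in> {1..m} \<and> k \<in> {1..deg H n j - 2}}"

definition F_cols :: "(nat \<Rightarrow> nat \<Rightarrow> 'r::ring_1) \<Rightarrow> nat \<Rightarrow> nat \<Rightarrow> (nat + nat \<times> nat) set" where
  "F_cols H m n = Inl ` {1..n} \<union> {Inr (j, l) | j l. j \<in> {1..m} \<and> l \<in> {1..deg H n j - 3}}"

definition F_cpos :: "(nat \<Rightarrow> nat \<Rightarrow> 'r::ring_1) \<Rightarrow> nat \<Rightarrow> (nat \<Rightarrow> nat \<Rightarrow> nat) \<Rightarrow> nat \<Rightarrow> nat \<Rightarrow> nat set" where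
  "F_cpos H n pos j k =
     (if k = 1 then {pos j 1, pos j 2}
      else if k = deg H n j - 2 then {pos j (deg H n j - 1), pos j (deg H n j)}
      else {pos j (k + 1)})"

definition F_mat :: "(nat \<Rightarrow> nat \<Rightarrow> 'r::ring_1) \<Rightarrow> nat \<Rightarrow> nat \<Rightarrow> (nat \<Rightarrow> nat \<Rightarrow> nat) \<Rightarrow>
                     nat \<times> nat \<Rightarrow> nat + nat \<times> nat \<Rightarrow> 'r" where
  "F_mat H m n pos = (\<lambda>(j, k) col.
     if (j, k) \<notin> F_rows H m n then 0 else
     (case col of
        Inl i \<Rightarrow> (if i \<in> F_cpos H n pos j k then H j i else 0)
      | Inr (j', l) \<Rightarrow>
          (if j' \<noteq> j then 0
           else if l = k \<and> k \<le> deg H n j - 3 then 1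
           else if k \<ge> 2 \<and> l = k - 1 then -1
           else 0)))"

end

theory Submission
  imports Defs "HOL-Library.FuncSet"
begin

text \<open>A point \<open>(f,w)\<close> of \<open>\<Q>\<close> lifts to \<open>\<S>\<close>: a local codeword \<open>g\<close> of check \<open>j\<close> forces the
  auxiliary symbols \<open>\<chi>\<^sup>j\<^sub>l\<close> to be negated partial sums of the \<open>g\<^sub>i H\<^sub>j\<^sub>,\<^sub>i\<close>, and pushing \<open>w\<^sub>j\<close> forward
  to the rows of check \<open>j\<close> gives the row weights of a point of \<open>\<S>\<close> with the same \<open>f\<close>.
  Conversely, the weights of consecutive rows of check \<open>j\<close> induce the same law on the
  auxiliary symbol they share, so they glue, like the transition laws of a Markov chain, to a
  probability distribution on consistent chains of row codewords with the given row marginals.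
  Each chain assembles to a local codeword of check \<open>j\<close>, because the auxiliary symbols
  telescope away, and the push-forward of the chain distribution is the required \<open>w\<^sub>j\<close>.\<close>

lemma finite_funs_vanishing_outside:
  assumes "finite S"
  shows "finite {g :: 'a \<Rightarrow> 'r::{zero,finite}. \<forall>x. x \<notin> S \<longrightarrow> g x = 0}"
proof -
  have "{g :: 'a \<Rightarrow> 'r. \<forall>x. x \<notin> S \<longrightarrow> g x = 0} =
        {g. \<forall>x. (x \<in> S \<longrightarrow> g x \<in> UNIV) \<and> (x \<notin> S \<longrightarrow> g x = 0)}" by auto
  then show ?thesis using finite_set_of_finite_funs[OF assms, of "UNIV::'r set" 0] by simp
qed

lemma sum_fibers_filter:
  fixes w :: "'a \<Rightarrow> real"
  assumes "finite A" "finite B" "r ` A \<subseteq> B"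
  shows "(\<Sum>b\<in>{b\<in>B. P b}. \<Sum>a\<in>{a\<in>A. r a = b}. w a) = (\<Sum>a\<in>{a\<in>A. P (r a)}. w a)"
proof -
  have "(\<Sum>b\<in>{b\<in>B. P b}. \<Sum>a\<in>{a\<in>A. r a = b}. w a)
      = (\<Sum>b\<in>{b\<in>B. P b}. \<Sum>a\<in>{a\<in>{a\<in>A. P (r a)}. r a = b}. w a)"
    by (intro sum.cong refl) auto
  also have "\<dots> = (\<Sum>a\<in>{a\<in>A. P (r a)}. w a)"
    by (rule sum.group) (use assms in auto)
  finally show ?thesis .
qed

lemma sum_fiber_zero:
  fixes \<nu> :: "'b \<Rightarrow> real" and \<phi> :: "'b \<Rightarrow> 'r::{zero,finite}"
  assumes "finite B" "sum \<nu> B = 1"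
  shows "(\<Sum>b\<in>{b\<in>B. \<phi> b = 0}. \<nu> b) = 1 - (\<Sum>a\<in>UNIV-{0}. \<Sum>b\<in>{b\<in>B. \<phi> b = a}. \<nu> b)"
proof -
  have "sum \<nu> B = (\<Sum>a\<in>UNIV. \<Sum>b\<in>{b\<in>B. \<phi> b = a}. \<nu> b)"
    by (rule sum.group[symmetric]) (use assms in auto)
  also have "\<dots> = (\<Sum>b\<in>{b\<in>B. \<phi> b = 0}. \<nu> b) + (\<Sum>a\<in>UNIV-{0}. \<Sum>b\<in>{b\<in>B. \<phi> b = a}. \<nu> b)"
    by (subst sum.remove[of _ 0]) auto
  finally show ?thesis using assms by simp
qed

lemma sum_mult_indicator:
  "finite A \<Longrightarrow> (\<Sum>a\<in>A. f a * (if P a then 1 else 0)) = (\<Sum>a\<in>{a\<in>A. P a}. (f a::real))"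
  by (auto simp: sum.inter_filter intro!: sum.cong)

lemma setcompr_comp_eq:
  assumes "{g x | x y. P x y} = {f. \<exists>w. Q f w}"
  shows "{c (g x) | x y. P x y} = {c f | f w. Q f w}"
proof -
  have "{c (g x) | x y. P x y} = c ` {g x | x y. P x y}" by blast
  then show ?thesis unfolding assms by blast
qed

lemma polytopeQ_memD:
  assumes "(F, W) \<in> polytopeQ A Rows Cols"
  shows "\<And>i \<alpha>. i \<notin> Cols \<or> \<alpha> = 0 \<Longrightarrow> F i \<alpha> = 0"
    and "\<And>\<rho> g. \<rho> \<in> Rows \<Longrightarrow> g \<in> local_code A Cols \<rho> \<Longrightarrow> W \<rho> g \<ge> 0"
    and "\<And>\<rho>. \<rho> \<in> Rows \<Longrightarrow> (\<Sum>g\<in>local_code A Cols \<rho>. W \<rho> g) = 1"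
    and "\<And>\<rho> i \<alpha>. \<rho> \<in> Rows \<Longrightarrow> i \<in> row_supp A Cols \<rho> \<Longrightarrow> \<alpha> \<noteq> 0 \<Longrightarrow>
           F i \<alpha> = (\<Sum>g\<in>{g \<in> local_code A Cols \<rho>. g i = \<alpha>}. W \<rho> g)"
  using assms unfolding polytopeQ_def by blast+

lemma polytopeQ_memI:
  assumes "\<And>i \<alpha>. i \<notin> Cols \<or> \<alpha> = 0 \<Longrightarrow> F i \<alpha> = 0"
    and "\<And>\<rho> g. \<rho> \<notin> Rows \<or> g \<notin> local_code A Cols \<rho> \<Longrightarrow> W \<rho> g = 0"
    and "\<And>\<rho> g. \<rho> \<in> Rows \<Longrightarrow> g \<in> local_code A Cols \<rho> \<Longrightarrow> W \<rho> g \<ge> 0"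
    and "\<And>\<rho>. \<rho> \<in> Rows \<Longrightarrow> (\<Sum>g\<in>local_code A Cols \<rho>. W \<rho> g) = 1"
    and "\<And>\<rho> i \<alpha>. \<rho> \<in> Rows \<Longrightarrow> i \<in> row_supp A Cols \<rho> \<Longrightarrow> \<alpha> \<noteq> 0 \<Longrightarrow>
           F i \<alpha> = (\<Sum>g\<in>{g \<in> local_code A Cols \<rho>. g i = \<alpha>}. W \<rho> g)"
  shows "(F, W) \<in> polytopeQ A Rows Cols"
  unfolding polytopeQ_def using assms by auto

text \<open>Fixing the values outside \<open>{1..K}\<close> to \<open>undefined\<close> makes a chain determined by its
  members, so that sums over chains count each family once.\<close>
definition chains :: "(nat \<Rightarrow> 'b set) \<Rightarrow> (nat \<Rightarrow> 'b \<Rightarrow> 'x) \<Rightarrow> (nat \<Rightarrow> 'b \<Rightarrow> 'x) \<Rightarrow> nat \<Rightarrow> (nat \<Rightarrow> 'b) set" where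
  "chains B L R K = {s. (\<forall>k. (k \<in> {1..K} \<longrightarrow> s k \<in> B k) \<and> (k \<notin> {1..K} \<longrightarrow> s k = undefined)) \<and>
      (\<forall>k. 1 \<le> k \<longrightarrow> k < K \<longrightarrow> R k (s k) = L (Suc k) (s (Suc k)))}"

lemma finite_chains:
  assumes "\<forall>k. finite (B k)"
  shows "finite (chains B L R K)"
proof -
  have "chains B L R K \<subseteq> PiE {1..K} B" unfolding chains_def PiE_def extensional_def by auto
  moreover have "finite (PiE {1..K} B)" using assms by (intro finite_PiE) auto
  ultimately show ?thesis by (rule finite_subset)
qed

lemma chains_undefined: "s \<in> chains B L R K \<Longrightarrow> s (Suc K) = undefined"
  unfolding chains_def by auto

lemma chains_SucD:
  assumes s: "s \<in> chains B L R (Suc K)"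
  shows "s(Suc K := undefined) \<in> chains B L R K" "s (Suc K) \<in> B (Suc K)"
    "K = 0 \<or> R K (s K) = L (Suc K) (s (Suc K))"
proof -
  have mem: "s k \<in> B k" if "k \<in> {1..Suc K}" for k using s that unfolding chains_def by blast
  have undef: "s k = undefined" if "k \<notin> {1..Suc K}" for k using s that unfolding chains_def by blast
  have link: "R k (s k) = L (Suc k) (s (Suc k))" if "1 \<le> k" "k < Suc K" for k
    using s that unfolding chains_def by blast
  show "s(Suc K := undefined) \<in> chains B L R K" unfolding chains_def using mem undef link by auto
  show "s (Suc K) \<in> B (Suc K)" using mem by auto
  show "K = 0 \<or> R K (s K) = L (Suc K) (s (Suc K))" using link[of K] by (cases K) auto
qed

lemma sum_chains_Suc:
  fixes G :: "(nat \<Rightarrow> 'b) \<Rightarrow> real"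
  assumes fin: "\<forall>k. finite (B k)"
  shows "(\<Sum>s'\<in>chains B L R (Suc K). G s') =
     (\<Sum>s\<in>chains B L R K. \<Sum>b\<in>{b\<in>B (Suc K). K = 0 \<or> R K (s K) = L (Suc K) b}. G (s(Suc K := b)))"
proof -
  let ?T = "chains B L R K" and ?T' = "chains B L R (Suc K)"
  let ?S = "Sigma ?T (\<lambda>s. {b\<in>B (Suc K). K = 0 \<or> R K (s K) = L (Suc K) b})"
  have bij: "bij_betw (\<lambda>(s,b). s(Suc K := b)) ?S ?T'"
  proof (rule bij_betwI[where g="\<lambda>s'. (s'(Suc K := undefined), s' (Suc K))"])
    show "(\<lambda>(s,b). s(Suc K := b)) \<in> ?S \<rightarrow> ?T'"
      unfolding chains_def by (auto simp: le_Suc_eq less_Suc_eq)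
    show "(\<lambda>s'. (s'(Suc K := undefined), s' (Suc K))) \<in> ?T' \<rightarrow> ?S"
    proof
      fix s' assume s': "s' \<in> ?T'"
      then show "(s'(Suc K := undefined), s' (Suc K)) \<in> ?S" using chains_SucD[OF s'] by auto
    qed
  qed (auto simp: chains_undefined)
  have "(\<Sum>s'\<in>?T'. G s') = (\<Sum>(s,b)\<in>?S. G (s(Suc K := b)))"
    using sum.reindex_bij_betw[OF bij, of G] by (simp add: case_prod_beta)
  also have "\<dots> = (\<Sum>s\<in>?T. \<Sum>b\<in>{b\<in>B (Suc K). K = 0 \<or> R K (s K) = L (Suc K) b}. G (s(Suc K := b)))"
    by (rule sum.Sigma[symmetric]) (use finite_chains[OF fin] fin in auto)
  finally show ?thesis .
qed

definition chain_coupling ::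
  "(nat \<Rightarrow> 'b set) \<Rightarrow> (nat \<Rightarrow> 'b \<Rightarrow> 'x) \<Rightarrow> (nat \<Rightarrow> 'b \<Rightarrow> 'x) \<Rightarrow> (nat \<Rightarrow> 'b \<Rightarrow> real) \<Rightarrow> nat \<Rightarrow>
   ((nat \<Rightarrow> 'b) \<Rightarrow> real) \<Rightarrow> bool" where
  "chain_coupling B L R \<nu> K \<pi> \<longleftrightarrow>
     (\<forall>s\<in>chains B L R K. \<pi> s \<ge> 0) \<and> sum \<pi> (chains B L R K) = 1 \<and>
     (\<forall>k\<in>{1..K}. \<forall>\<phi>. (\<Sum>s\<in>chains B L R K. \<pi> s * \<phi> (s k)) = (\<Sum>b\<in>B k. \<nu> k b * \<phi> b))"

lemma chain_coupling_marginal: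
  "chain_coupling B L R \<nu> K \<pi> \<Longrightarrow> k \<in> {1..K} \<Longrightarrow>
     (\<Sum>s\<in>chains B L R K. \<pi> s * \<phi> (s k)) = (\<Sum>b\<in>B k. \<nu> k b * \<phi> b)"
  unfolding chain_coupling_def by blast

lemma chain_coupling_one:
  fixes B :: "nat \<Rightarrow> 'b set"
  assumes fin: "\<forall>k. finite (B k)"
    and nonneg: "\<forall>b\<in>B 1. \<nu> 1 b \<ge> 0" and total: "sum (\<nu> 1) (B 1) = 1"
  shows "chain_coupling B L R \<nu> 1 (\<lambda>s. \<nu> 1 (s 1))"
proof -
  have chains0: "chains B L R 0 = {\<lambda>_. undefined}" unfolding chains_def by auto
  have sum1: "(\<Sum>s\<in>chains B L R 1. G s) = (\<Sum>b\<in>B 1. G ((\<lambda>_. undefined)(1 := b)))"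
    for G :: "(nat \<Rightarrow> 'b) \<Rightarrow> real"
    using sum_chains_Suc[OF fin, where K=0 and G=G and L=L and R=R] by (simp add: chains0 fun_upd_def)
  have "s 1 \<in> B 1" if "s \<in> chains B L R 1" for s using chains_SucD(2)[of s _ _ _ 0] that by simp
  then show ?thesis unfolding chain_coupling_def sum1 using nonneg total by auto
qed

lemma chain_coupling_link_law:
  assumes fin: "\<forall>k. finite (B k)" and \<pi>: "chain_coupling B L R \<nu> K \<pi>" and K: "1 \<le> K"
  shows "(\<Sum>s\<in>{s\<in>chains B L R K. R K (s K) = x}. \<pi> s) = (\<Sum>b\<in>{b\<in>B K. R K b = x}. \<nu> K b)"
proof -
  have "(\<Sum>s\<in>{s\<in>chains B L R K. R K (s K) = x}. \<pi> s)
      = (\<Sum>s\<in>chains B L R K. \<pi> s * (if R K (s K) = x then 1 else 0))"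
    by (simp add: sum_mult_indicator finite_chains[OF fin])
  also have "\<dots> = (\<Sum>b\<in>B K. \<nu> K b * (if R K b = x then 1 else 0))"
    using chain_coupling_marginal[OF \<pi>, of K "\<lambda>b. if R K b = x then 1 else 0"] K by simp
  also have "\<dots> = (\<Sum>b\<in>{b\<in>B K. R K b = x}. \<nu> K b)" by (simp add: sum_mult_indicator fin)
  finally show ?thesis .
qed

text \<open>The Markov-chain gluing: the new member is drawn from \<open>\<nu> (K+1)\<close> conditioned on its
  link value, which by the consistency hypothesis has the same law as the link value of the
  last member of the old chain.\<close>
locale chain_gluing =
  fixes B :: "nat \<Rightarrow> 'b set" and L R :: "nat \<Rightarrow> 'b \<Rightarrow> 'x" and \<nu> :: "nat \<Rightarrow> 'b \<Rightarrow> real"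
    and K :: nat and \<pi> :: "(nat \<Rightarrow> 'b) \<Rightarrow> real"
  assumes fin: "\<forall>k. finite (B k)" and K_pos: "1 \<le> K"
    and coupling: "chain_coupling B L R \<nu> K \<pi>"
    and nonneg: "\<forall>b\<in>B (Suc K). \<nu> (Suc K) b \<ge> 0"
    and consistent: "\<And>x. (\<Sum>b\<in>{b\<in>B K. R K b = x}. \<nu> K b)
                         = (\<Sum>b\<in>{b\<in>B (Suc K). L (Suc K) b = x}. \<nu> (Suc K) b)"
begin

definition link_mass :: "'x \<Rightarrow> real" where
  "link_mass x = (\<Sum>b\<in>{b\<in>B (Suc K). L (Suc K) b = x}. \<nu> (Suc K) b)"

definition glued :: "(nat \<Rightarrow> 'b) \<Rightarrow> real" where
  "glued s = \<pi> (s(Suc K := undefined)) * \<nu> (Suc K) (s (Suc K)) / link_mass (L (Suc K) (s (Suc K)))"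

lemma glued_upd: "s \<in> chains B L R K \<Longrightarrow> glued (s(Suc K := b)) = \<pi> s * \<nu> (Suc K) b / link_mass (L (Suc K) b)"
  unfolding glued_def by (simp add: chains_undefined fun_upd_idem)

lemma sum_chains_Suc_linked:
  fixes G :: "(nat \<Rightarrow> 'b) \<Rightarrow> real"
  shows "(\<Sum>s'\<in>chains B L R (Suc K). G s')
     = (\<Sum>s\<in>chains B L R K. \<Sum>b\<in>{b\<in>B (Suc K). R K (s K) = L (Suc K) b}. G (s(Suc K := b)))"
  using sum_chains_Suc[OF fin, where K=K and G=G] K_pos by simp

lemma old_link_law: "(\<Sum>s\<in>{s\<in>chains B L R K. R K (s K) = x}. \<pi> s) = link_mass x"
  unfolding link_mass_def chain_coupling_link_law[OF fin coupling K_pos] by (rule consistent)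

lemma old_member_weight:
  assumes s: "s \<in> chains B L R K"
  shows "\<pi> s * (\<Sum>b\<in>{b\<in>B (Suc K). R K (s K) = L (Suc K) b}. \<nu> (Suc K) b / link_mass (L (Suc K) b)) = \<pi> s"
proof -
  let ?x = "R K (s K)"
  have nonneg_\<pi>: "\<forall>s\<in>chains B L R K. \<pi> s \<ge> 0" using coupling unfolding chain_coupling_def by blast
  have "(\<Sum>b\<in>{b\<in>B (Suc K). ?x = L (Suc K) b}. \<nu> (Suc K) b / link_mass (L (Suc K) b)) = link_mass ?x / link_mass ?x"
    unfolding link_mass_def sum_divide_distrib by (intro sum.cong) auto
  moreover have "\<pi> s \<le> link_mass ?x"
    unfolding old_link_law[symmetric]
    by (rule member_le_sum) (use s nonneg_\<pi> finite_chains[OF fin, of L R K] in auto)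
  ultimately show ?thesis using nonneg_\<pi> s by (cases "link_mass ?x = 0") auto
qed

lemma new_member_weight:
  assumes b: "b \<in> B (Suc K)"
  shows "\<nu> (Suc K) b / link_mass (L (Suc K) b) * (\<Sum>s\<in>{s\<in>chains B L R K. R K (s K) = L (Suc K) b}. \<pi> s)
    = \<nu> (Suc K) b"
proof -
  have "\<nu> (Suc K) b \<le> link_mass (L (Suc K) b)"
    unfolding link_mass_def by (rule member_le_sum) (use b nonneg fin in auto)
  then show ?thesis using nonneg b old_link_law by (cases "link_mass (L (Suc K) b) = 0") auto
qed

lemma glued_marginal_old:
  assumes k: "k \<in> {1..K}"
  shows "(\<Sum>s'\<in>chains B L R (Suc K). glued s' * \<phi> (s' k)) = (\<Sum>b\<in>B k. \<nu> k b * \<phi> b)"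
proof -
  let ?T = "chains B L R K"
  have "(\<Sum>s'\<in>chains B L R (Suc K). glued s' * \<phi> (s' k))
      = (\<Sum>s\<in>?T. \<phi> (s k) * (\<pi> s * (\<Sum>b\<in>{b\<in>B (Suc K). R K (s K) = L (Suc K) b}.
                                   \<nu> (Suc K) b / link_mass (L (Suc K) b))))"
    unfolding sum_chains_Suc_linked using k
    by (intro sum.cong refl) (simp add: glued_upd sum_distrib_left mult_ac)
  also have "\<dots> = (\<Sum>s\<in>?T. \<pi> s * \<phi> (s k))" by (intro sum.cong refl) (simp add: old_member_weight)
  also have "\<dots> = (\<Sum>b\<in>B k. \<nu> k b * \<phi> b)" by (rule chain_coupling_marginal[OF coupling k])
  finally show ?thesis .
qed

lemma glued_marginal_new:
  "(\<Sum>s'\<in>chains B L R (Suc K). glued s' * \<phi> (s' (Suc K))) = (\<Sum>b\<in>B (Suc K). \<nu> (Suc K) b * \<phi> b)"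
proof -
  let ?T = "chains B L R K" and ?w = "\<lambda>b. \<nu> (Suc K) b / link_mass (L (Suc K) b)"
  have "(\<Sum>s'\<in>chains B L R (Suc K). glued s' * \<phi> (s' (Suc K)))
      = (\<Sum>s\<in>?T. \<Sum>b\<in>{b\<in>B (Suc K). R K (s K) = L (Suc K) b}. \<pi> s * ?w b * \<phi> b)"
    unfolding sum_chains_Suc_linked by (intro sum.cong refl) (simp add: glued_upd)
  also have "\<dots> = (\<Sum>b\<in>B (Suc K). \<Sum>s\<in>{s\<in>?T. R K (s K) = L (Suc K) b}. \<pi> s * ?w b * \<phi> b)"
    by (rule sum.swap_restrict) (use finite_chains[OF fin] fin in auto)
  also have "\<dots> = (\<Sum>b\<in>B (Suc K). \<phi> b * (?w b * (\<Sum>s\<in>{s\<in>?T. R K (s K) = L (Suc K) b}. \<pi> s)))"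
    by (intro sum.cong refl) (simp add: sum_distrib_left sum_distrib_right mult_ac)
  also have "\<dots> = (\<Sum>b\<in>B (Suc K). \<nu> (Suc K) b * \<phi> b)"
  proof (intro sum.cong refl)
    fix b assume "b \<in> B (Suc K)"
    from new_member_weight[OF this]
    show "\<phi> b * (?w b * (\<Sum>s\<in>{s\<in>?T. R K (s K) = L (Suc K) b}. \<pi> s)) = \<nu> (Suc K) b * \<phi> b"
      by simp
  qed
  finally show ?thesis .
qed

lemma glued_coupling: "chain_coupling B L R \<nu> (Suc K) glued"
proof -
  have "glued s' \<ge> 0" if s': "s' \<in> chains B L R (Suc K)" for s'
  proof -
    have "link_mass x \<ge> 0" for x unfolding link_mass_def using nonneg by (auto intro: sum_nonneg)
    then show ?thesis
      using coupling chains_SucD(1,2)[OF s'] nonneg unfolding glued_def chain_coupling_def by simp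
  qed
  moreover have marginals: "(\<Sum>s'\<in>chains B L R (Suc K). glued s' * \<phi> (s' k)) = (\<Sum>b\<in>B k. \<nu> k b * \<phi> b)"
    if "k \<in> {1..Suc K}" for k \<phi>
    using that glued_marginal_old[of k \<phi>] glued_marginal_new[of \<phi>] by (cases "k = Suc K") auto
  moreover have "sum glued (chains B L R (Suc K)) = 1"
    using marginals[of 1 "\<lambda>_. 1"] chain_coupling_marginal[OF coupling, of 1 "\<lambda>_. 1"] coupling K_pos
    unfolding chain_coupling_def by simp
  ultimately show ?thesis unfolding chain_coupling_def by blast
qed

end

lemma chain_coupling_exists:
  assumes fin: "\<forall>k. finite (B k)"
    and nonneg: "\<forall>k\<in>{1..N}. \<forall>b\<in>B k. \<nu> k b \<ge> 0"
    and total: "\<forall>k\<in>{1..N}. sum (\<nu> k) (B k) = 1"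
    and consistent: "\<And>k x. 1 \<le> k \<Longrightarrow> k < N \<Longrightarrow> (\<Sum>b\<in>{b\<in>B k. R k b = x}. \<nu> k b)
                         = (\<Sum>b\<in>{b\<in>B (Suc k). L (Suc k) b = x}. \<nu> (Suc k) b)"
    and N: "1 \<le> N"
  shows "\<exists>\<pi>. chain_coupling B L R \<nu> N \<pi>"
proof -
  have "\<exists>\<pi>. chain_coupling B L R \<nu> K \<pi>" if "1 \<le> K" "K \<le> N" for K
    using that
  proof (induction K rule: nat_induct_at_least)
    case base
    show ?case by (rule exI, rule chain_coupling_one[OF fin]) (use nonneg total N in auto)
  next
    case (Suc K)
    then obtain \<pi> where \<pi>: "chain_coupling B L R \<nu> K \<pi>" by auto
    interpret chain_gluing B L R \<nu> K \<pi>
      using fin Suc.hyps \<pi> nonneg consistent Suc.prems by unfold_locales auto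
    show ?case using glued_coupling by blast
  qed
  then show ?thesis using N by blast
qed

lemma sum_regroup_ends:
  fixes a :: "nat \<Rightarrow> 'a::comm_monoid_add"
  assumes "d \<ge> 4"
  shows "(\<Sum>k\<in>{1..d-2}. (if k = 1 then a 1 + a 2 else if k = d-2 then a (d-1) + a d else a (k+1)))
         = (\<Sum>t\<in>{1..d}. a t)"
proof -
  obtain e where d: "d = e + 4" using assms by (metis add.commute le_Suc_ex)
  have s1: "{1..d-2} = insert 1 (insert (e+2) {2..e+1})" unfolding d by auto
  have s2: "{1..d} = insert 1 (insert 2 (insert (e+3) (insert (e+4) {3..e+2})))" unfolding d by auto
  have mid: "(\<Sum>k\<in>{2..e+1}. a (k+1)) = (\<Sum>t\<in>{3..e+2}. a t)"
    using sum.shift_bounds_cl_Suc_ivl[of a 2 "e+1"] by (simp add: numeral_3_eq_3)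
  have "(\<Sum>k\<in>{1..d-2}. (if k = 1 then a 1 + a 2 else if k = d-2 then a (d-1) + a d else a (k+1)))
     = (a 1 + a 2) + ((a (e+3) + a (e+4)) + (\<Sum>k\<in>{2..e+1}. a (k+1)))"
    unfolding s1 by (simp add: d ac_simps)
  also have "(\<Sum>t\<in>{1..d}. a t) = a 1 + (a 2 + (a (e+3) + (a (e+4) + (\<Sum>t\<in>{3..e+2}. a t))))"
    unfolding s2 by simp
  ultimately show ?thesis using mid by (simp add: ac_simps)
qed

lemma sum_telescoping_links:
  fixes x :: "nat \<Rightarrow> 'a::ab_group_add"
  assumes "d \<ge> 4"
  shows "(\<Sum>k\<in>{1..d-2}. (if k \<le> d-3 then x k else 0) - (if 2 \<le> k then x (k-1) else 0)) = 0"
proof -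
  obtain e where d: "d = e + 4" using assms by (metis add.commute le_Suc_ex)
  have "{1..d-2} = insert (e+2) {1..e+1}" unfolding d by auto
  then have out: "(\<Sum>k\<in>{1..d-2}. (if k \<le> d-3 then x k else 0)) = (\<Sum>k\<in>{1..e+1}. x k)"
    by (simp add: d)
  have "{1..d-2} = insert 1 {Suc 1..Suc (e+1)}" unfolding d by auto
  then have "(\<Sum>k\<in>{1..d-2}. (if 2 \<le> k then x (k-1) else 0))
      = (\<Sum>k\<in>{Suc 1..Suc (e+1)}. (if 2 \<le> k then x (k-1) else 0))"
    by simp
  also have "\<dots> = (\<Sum>k\<in>{1..e+1}. (if 2 \<le> Suc k then x (Suc k - 1) else 0))"
    by (rule sum.shift_bounds_cl_Suc_ivl)
  also have "\<dots> = (\<Sum>k\<in>{1..e+1}. x k)" by (rule sum.cong) auto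
  finally show ?thesis unfolding sum_subtractf out by simp
qed

locale check_splitting =
  fixes H :: "nat \<Rightarrow> nat \<Rightarrow> 'r::{ring_1,finite}" and m n :: nat and pos :: "nat \<Rightarrow> nat \<Rightarrow> nat"
  assumes deg_ge_4: "\<forall>j\<in>{1..m}. deg H n j \<ge> 4"
    and pos_bij: "\<forall>j\<in>{1..m}. bij_betw (pos j) {1..deg H n j} (Iset H n j)"
begin

abbreviation "dg j \<equiv> deg H n j"
abbreviation "FM \<equiv> F_mat H m n pos"
abbreviation "FR \<equiv> F_rows H m n"
abbreviation "FC \<equiv> F_cols H m n"
abbreviation "cpos \<equiv> F_cpos H n pos"

lemma dg_ge_4: "j \<in> {1..m} \<Longrightarrow> dg j \<ge> 4"
  using deg_ge_4 by blast

lemma pos_in_Iset: "j \<in> {1..m} \<Longrightarrow> t \<in> {1..dg j} \<Longrightarrow> pos j t \<in> Iset H n j"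
  using pos_bij bij_betwE by blast

lemma pos_inj: "j \<in> {1..m} \<Longrightarrow> t \<in> {1..dg j} \<Longrightarrow> t' \<in> {1..dg j} \<Longrightarrow> pos j t = pos j t' \<Longrightarrow> t = t'"
  using pos_bij unfolding bij_betw_def inj_on_def by blast

lemma IsetD: "i \<in> Iset H n j \<Longrightarrow> i \<in> {1..n} \<and> H j i \<noteq> 0"
  unfolding Iset_def by auto

lemma row_supp_H: "row_supp H {1..n} j = Iset H n j"
  unfolding row_supp_def Iset_def by auto

lemma F_rows_iff: "(j,k) \<in> FR \<longleftrightarrow> j \<in> {1..m} \<and> 1 \<le> k \<and> k \<le> dg j - 2"
  unfolding F_rows_def by auto

lemma Inl_in_F_cols: "Inl i \<in> FC \<longleftrightarrow> i \<in> {1..n}"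
  unfolding F_cols_def by auto

lemma Inr_in_F_cols: "Inr (j,l) \<in> FC \<longleftrightarrow> j \<in> {1..m} \<and> l \<in> {1..dg j - 3}"
  unfolding F_cols_def by auto

text \<open>A check of degree at least 4 has a nonzero entry, so the ring is nontrivial and the
  \<open>\<plusminus>1\<close> entries of \<open>F\<close> belong to the row supports.\<close>
lemma one_neq_zero: "j \<in> {1..m} \<Longrightarrow> (1::'r) \<noteq> 0"
proof
  assume j: "j \<in> {1..m}" and "(1::'r) = 0"
  then have "H j (pos j 1) = 0" by (metis mult_1 mult_zero_left)
  moreover have "pos j 1 \<in> Iset H n j" using pos_in_Iset[OF j, of 1] dg_ge_4[OF j] by auto
  ultimately show False using IsetD by blast
qed

lemma cpos_subset_Iset: "j \<in> {1..m} \<Longrightarrow> 1 \<le> k \<Longrightarrow> k \<le> dg j - 2 \<Longrightarrow> cpos j k \<subseteq> Iset H n j"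
  using pos_in_Iset[of j] dg_ge_4[of j] unfolding F_cpos_def by auto

lemma sum_cpos:
  assumes j: "j \<in> {1..m}" and k: "1 \<le> k" "k \<le> dg j - 2"
  shows "(\<Sum>i\<in>cpos j k. f i) = (if k = 1 then f (pos j 1) + f (pos j 2)
     else if k = dg j - 2 then f (pos j (dg j - 1)) + f (pos j (dg j)) else f (pos j (k+1)))"
proof -
  have d: "dg j \<ge> 4" by (rule dg_ge_4[OF j])
  have "pos j 1 \<noteq> pos j 2" using pos_inj[OF j, of 1 2] d by auto
  moreover have "dg j - 1 \<in> {1..dg j}" "dg j \<in> {1..dg j}" "dg j - 1 \<noteq> dg j" using d by auto
  then have "pos j (dg j - 1) \<noteq> pos j (dg j)" using pos_inj[OF j, of "dg j - 1" "dg j"] by blast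
  ultimately show ?thesis unfolding F_cpos_def by auto
qed

lemma row_supp_F:
  assumes j: "j \<in> {1..m}" and k: "1 \<le> k" "k \<le> dg j - 2"
  shows "row_supp FM FC (j,k) = Inl ` cpos j k \<union> (if k \<le> dg j - 3 then {Inr (j,k)} else {})
            \<union> (if 2 \<le> k then {Inr (j,k-1)} else {})"
proof (rule set_eqI)
  have jk: "(j,k) \<in> FR" using j k F_rows_iff by blast
  fix c
  show "c \<in> row_supp FM FC (j,k) \<longleftrightarrow> c \<in> Inl ` cpos j k \<union> (if k \<le> dg j - 3 then {Inr (j,k)} else {})
            \<union> (if 2 \<le> k then {Inr (j,k-1)} else {})"
  proof (cases c)
    case (Inl i)
    then show ?thesis using jk cpos_subset_Iset[OF j k] IsetD[of i j]
      unfolding row_supp_def F_cols_def by (auto simp: F_mat_def)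
  next
    case (Inr p)
    then obtain j' l where "c = Inr (j', l)" by (cases p) auto
    then show ?thesis using jk j k one_neq_zero[OF j]
      unfolding row_supp_def F_cols_def by (auto simp: F_mat_def)
  qed
qed

lemma F_row_sum:
  assumes j: "j \<in> {1..m}" and k: "1 \<le> k" "k \<le> dg j - 2"
  shows "(\<Sum>c\<in>row_supp FM FC (j,k). G c * FM (j,k) c) =
     (\<Sum>i\<in>cpos j k. G (Inl i) * H j i) + (if k \<le> dg j - 3 then G (Inr (j,k)) else 0)
       - (if 2 \<le> k then G (Inr (j,k-1)) else 0)"
proof -
  have jk: "(j,k) \<in> FR" using j k F_rows_iff by blast
  have fin: "finite (cpos j k)" unfolding F_cpos_def by auto
  let ?A = "Inl ` cpos j k" and ?B = "(if k \<le> dg j - 3 then {Inr (j,k)} else {})"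
    and ?C = "(if 2 \<le> k then {Inr (j,k-1)} else {}) :: (nat + nat \<times> nat) set"
  have "(\<Sum>c\<in>?A \<union> ?B \<union> ?C. G c * FM (j,k) c)
      = (\<Sum>c\<in>?A \<union> ?B. G c * FM (j,k) c) + (\<Sum>c\<in>?C. G c * FM (j,k) c)"
    by (rule sum.union_disjoint) (use fin in auto)
  also have "(\<Sum>c\<in>?A \<union> ?B. G c * FM (j,k) c) = (\<Sum>c\<in>?A. G c * FM (j,k) c) + (\<Sum>c\<in>?B. G c * FM (j,k) c)"
    by (rule sum.union_disjoint) (use fin in auto)
  moreover have "(\<Sum>c\<in>?A. G c * FM (j,k) c) = (\<Sum>i\<in>cpos j k. G (Inl i) * H j i)"
    using jk by (simp add: sum.reindex F_mat_def)
  moreover have "(\<Sum>c\<in>?B. G c * FM (j,k) c) = (if k \<le> dg j - 3 then G (Inr (j,k)) else 0)"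
    using jk by (simp add: F_mat_def)
  moreover have "(\<Sum>c\<in>?C. G c * FM (j,k) c) = (if 2 \<le> k then - G (Inr (j,k-1)) else 0)"
    using jk by (auto simp: F_mat_def)
  ultimately show ?thesis unfolding row_supp_F[OF j k] by simp
qed

lemma finite_local_code_F: "finite (local_code FM FC \<rho>)"
proof -
  have chi_cols: "{Inr (j, l) | j l. j \<in> {1..m} \<and> l \<in> {1..dg j - 3}} = Inr ` (Sigma {1..m} (\<lambda>j. {1..dg j - 3}))"
    by blast
  have "finite FC" unfolding F_cols_def chi_cols by auto
  moreover have "local_code FM FC \<rho> \<subseteq> {g. \<forall>x. x \<notin> FC \<longrightarrow> g x = 0}"
    unfolding local_code_def row_supp_def by auto
  ultimately show ?thesis using finite_funs_vanishing_outside finite_subset by blast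
qed

lemma finite_local_code_H: "finite (local_code H {1..n} j)"
proof -
  have "local_code H {1..n} j \<subseteq> {g. \<forall>x. x \<notin> {1..n} \<longrightarrow> g x = 0}"
    unfolding local_code_def row_supp_def by auto
  then show ?thesis using finite_funs_vanishing_outside[of "{1..n}"] finite_subset by blast
qed


definition psum :: "nat \<Rightarrow> nat \<Rightarrow> (nat \<Rightarrow> 'r) \<Rightarrow> 'r" where
  "psum j l g = (\<Sum>t\<in>{1..l}. g (pos j t) * H j (pos j t))"

lemma psum_Suc: "psum j (Suc l) g = psum j l g + g (pos j (Suc l)) * H j (pos j (Suc l))"
  unfolding psum_def by simp

lemma psum_dg: "j \<in> {1..m} \<Longrightarrow> psum j (dg j) g = (\<Sum>i\<in>Iset H n j. g i * H j i)"
  unfolding psum_def using sum.reindex_bij_betw[of "pos j" _ _ "\<lambda>i. g i * H j i"] pos_bij by simp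

text \<open>Solving the first \<open>l\<close> chain equations of check \<open>j\<close> for \<open>\<chi>\<^sup>j\<^sub>l\<close> gives minus the partial sum
  of the first \<open>l + 1\<close> terms of the check.\<close>
definition chi :: "nat \<Rightarrow> nat \<Rightarrow> (nat \<Rightarrow> 'r) \<Rightarrow> 'r" where
  "chi j l g = - psum j (l+1) g"

definition extend_word :: "nat \<Rightarrow> (nat \<Rightarrow> 'r) \<Rightarrow> nat + nat \<times> nat \<Rightarrow> 'r" where
  "extend_word j g c = (case c of Inl i \<Rightarrow> g i | Inr (_, l) \<Rightarrow> chi j l g)"

definition row_word :: "nat \<Rightarrow> nat \<Rightarrow> (nat \<Rightarrow> 'r) \<Rightarrow> nat + nat \<times> nat \<Rightarrow> 'r" where
  "row_word j k g c = (if c \<in> row_supp FM FC (j,k) then extend_word j g c else 0)"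

lemma row_word_in_local_code:
  assumes j: "j \<in> {1..m}" and k: "1 \<le> k" "k \<le> dg j - 2" and g: "g \<in> local_code H {1..n} j"
  shows "row_word j k g \<in> local_code FM FC (j,k)"
proof -
  have d: "dg j \<ge> 4" by (rule dg_ge_4[OF j])
  have g0: "psum j (dg j) g = 0" using g unfolding local_code_def row_supp_H psum_dg[OF j] by auto
  let ?a = "\<lambda>t. g (pos j t) * H j (pos j t)"
  have "(\<Sum>c\<in>row_supp FM FC (j,k). extend_word j g c * FM (j,k) c)
      = (\<Sum>i\<in>cpos j k. g i * H j i) + (if k \<le> dg j - 3 then chi j k g else 0)
          - (if 2 \<le> k then chi j (k-1) g else 0)"
    unfolding F_row_sum[OF j k] by (simp add: extend_word_def)
  also have "\<dots> = 0"
  proof -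
    consider "k = 1" | "k = dg j - 2" | "2 \<le> k" "k \<le> dg j - 3" using k d by linarith
    then show ?thesis
    proof cases
      case 1
      have "psum j (Suc (Suc 0)) g = ?a 1 + ?a 2" by (simp add: numeral_2_eq_2 psum_Suc psum_def)
      moreover have "Suc 0 \<le> dg j - 3" using d by simp
      ultimately show ?thesis using 1 unfolding sum_cpos[OF j k] chi_def by simp
    next
      case 2
      have "dg j = Suc (Suc (dg j - 2))" using d by simp
      then have "psum j (dg j) g = psum j (dg j - 2) g + ?a (dg j - 1) + ?a (dg j)"
        by (metis psum_Suc Suc_diff_Suc diff_Suc_1 numeral_2_eq_2)
      then have "psum j (dg j - 2) g + (?a (dg j - 1) + ?a (dg j)) = 0"
        using g0 by (simp add: add.assoc)
      then have "?a (dg j - 1) + ?a (dg j) = - psum j (dg j - 2) g"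
        by (metis neg_eq_iff_add_eq_0 add.commute)
      moreover have "dg j - 2 - 1 + 1 = dg j - 2" "2 \<le> dg j - 2" "\<not> dg j - 2 \<le> dg j - 3" "dg j - 2 \<noteq> 1"
        using d by auto
      ultimately show ?thesis using 2 unfolding sum_cpos[OF j k] chi_def by simp
    next
      case 3
      then have "k \<noteq> 1" "k \<noteq> dg j - 2" "k - 1 + 1 = k" "k + 1 = Suc k" by auto
      then show ?thesis using 3 unfolding sum_cpos[OF j k] chi_def by (simp add: psum_Suc)
    qed
  qed
  finally show ?thesis unfolding local_code_def row_word_def by auto
qed

definition lifted_F :: "(nat \<Rightarrow> 'r \<Rightarrow> real) \<Rightarrow> (nat \<Rightarrow> (nat \<Rightarrow> 'r) \<Rightarrow> real) \<Rightarrow> nat + nat \<times> nat \<Rightarrow> 'r \<Rightarrow> real" where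
  "lifted_F f w c \<alpha> = (case c of Inl i \<Rightarrow> f i \<alpha> | Inr (j,l) \<Rightarrow>
      (if j \<in> {1..m} \<and> l \<in> {1..dg j - 3} \<and> \<alpha> \<noteq> 0
       then (\<Sum>g\<in>{g \<in> local_code H {1..n} j. chi j l g = \<alpha>}. w j g) else 0))"

definition lifted_W :: "(nat \<Rightarrow> (nat \<Rightarrow> 'r) \<Rightarrow> real) \<Rightarrow> nat \<times> nat \<Rightarrow> (nat + nat \<times> nat \<Rightarrow> 'r) \<Rightarrow> real" where
  "lifted_W w \<rho> G = (if \<rho> \<in> FR \<and> G \<in> local_code FM FC \<rho>
      then (\<Sum>g\<in>{g \<in> local_code H {1..n} (fst \<rho>). row_word (fst \<rho>) (snd \<rho>) g = G}. w (fst \<rho>) g) else 0)"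

lemma sum_lifted_W:
  assumes "(j,k) \<in> FR"
  shows "(\<Sum>G\<in>{G\<in>local_code FM FC (j,k). P G}. lifted_W w (j,k) G)
       = (\<Sum>g\<in>{g\<in>local_code H {1..n} j. P (row_word j k g)}. w j g)"
proof -
  have jk: "j \<in> {1..m}" "1 \<le> k" "k \<le> dg j - 2" using assms F_rows_iff by auto
  have "(\<Sum>G\<in>{G\<in>local_code FM FC (j,k). P G}. lifted_W w (j,k) G)
    = (\<Sum>G\<in>{G\<in>local_code FM FC (j,k). P G}. \<Sum>g\<in>{g \<in> local_code H {1..n} j. row_word j k g = G}. w j g)"
    unfolding lifted_W_def using assms by (intro sum.cong refl) auto
  also have "\<dots> = (\<Sum>g\<in>{g\<in>local_code H {1..n} j. P (row_word j k g)}. w j g)"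
    by (rule sum_fibers_filter) (use finite_local_code_F finite_local_code_H row_word_in_local_code[OF jk] in auto)
  finally show ?thesis .
qed

lemma lifted_F_marginal:
  assumes fw: "(f,w) \<in> polytopeQ H {1..m} {1..n}"
    and jk: "(j,k) \<in> FR" and c: "c \<in> row_supp FM FC (j,k)" and \<alpha>: "\<alpha> \<noteq> 0"
  shows "lifted_F f w c \<alpha> = (\<Sum>G\<in>{G \<in> local_code FM FC (j,k). G c = \<alpha>}. lifted_W w (j,k) G)"
proof -
  have j: "j \<in> {1..m}" and k: "1 \<le> k" "k \<le> dg j - 2" using jk F_rows_iff by auto
  have "(\<Sum>G\<in>{G \<in> local_code FM FC (j,k). G c = \<alpha>}. lifted_W w (j,k) G)
      = (\<Sum>g\<in>{g\<in>local_code H {1..n} j. extend_word j g c = \<alpha>}. w j g)"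
    unfolding sum_lifted_W[OF jk] row_word_def using c by simp
  also have "\<dots> = lifted_F f w c \<alpha>"
  proof (cases c)
    case (Inl i)
    then have "i \<in> Iset H n j" using c row_supp_F[OF j k] cpos_subset_Iset[OF j k] by (auto split: if_splits)
    then show ?thesis
      using polytopeQ_memD(4)[OF fw j, of i \<alpha>] \<alpha> Inl unfolding row_supp_H lifted_F_def extend_word_def by simp
  next
    case (Inr p)
    then have "p = (j,k) \<and> k \<le> dg j - 3 \<or> p = (j, k-1) \<and> 2 \<le> k"
      using c row_supp_F[OF j k] by (auto split: if_splits)
    moreover have "2 \<le> k \<Longrightarrow> k - 1 \<in> {1..dg j - 3}" using k by auto
    ultimately obtain l where "p = (j,l)" "l \<in> {1..dg j - 3}" using k by auto
    then show ?thesis using Inr j \<alpha> unfolding lifted_F_def extend_word_def by simp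
  qed
  finally show ?thesis by simp
qed

lemma lifted_in_polytopeQ:
  assumes fw: "(f,w) \<in> polytopeQ H {1..m} {1..n}"
  shows "(lifted_F f w, lifted_W w) \<in> polytopeQ FM FR FC"
proof (rule polytopeQ_memI)
  show "lifted_F f w c \<alpha> = 0" if "c \<notin> FC \<or> \<alpha> = 0" for c \<alpha>
  proof (cases c)
    case (Inl i)
    then show ?thesis using that polytopeQ_memD(1)[OF fw] Inl_in_F_cols[of i] unfolding lifted_F_def by auto
  next
    case (Inr p)
    then obtain j l where "c = Inr (j,l)" by (cases p) auto
    then show ?thesis using that Inr_in_F_cols[of j l] unfolding lifted_F_def by auto
  qed
  show "lifted_W w \<rho> G = 0" if "\<rho> \<notin> FR \<or> G \<notin> local_code FM FC \<rho>" for \<rho> G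
    using that unfolding lifted_W_def by auto
  show "lifted_W w \<rho> G \<ge> 0" if "\<rho> \<in> FR" for \<rho> G
    using polytopeQ_memD(2)[OF fw] that F_rows_iff unfolding lifted_W_def
    by (cases \<rho>) (auto intro!: sum_nonneg)
  show "(\<Sum>G\<in>local_code FM FC \<rho>. lifted_W w \<rho> G) = 1" if \<rho>: "\<rho> \<in> FR" for \<rho>
  proof -
    obtain j k where jk: "\<rho> = (j,k)" "j \<in> {1..m}" using \<rho> F_rows_iff by (cases \<rho>) auto
    then show ?thesis using sum_lifted_W[where P="\<lambda>_. True" and w=w] polytopeQ_memD(3)[OF fw] \<rho> by simp
  qed
  show "lifted_F f w c \<alpha> = (\<Sum>G\<in>{G \<in> local_code FM FC \<rho>. G c = \<alpha>}. lifted_W w \<rho> G)"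
    if "\<rho> \<in> FR" "c \<in> row_supp FM FC \<rho>" "\<alpha> \<noteq> 0" for \<rho> c \<alpha>
    using lifted_F_marginal[OF fw] that by (cases \<rho>) simp
qed

abbreviation row_chains :: "nat \<Rightarrow> nat \<Rightarrow> (nat \<Rightarrow> nat + nat \<times> nat \<Rightarrow> 'r) set" where
  "row_chains j \<equiv> chains (\<lambda>k. local_code FM FC (j,k)) (\<lambda>k G. G (Inr (j, k - 1))) (\<lambda>k G. G (Inr (j, k)))"

lemma row_marginals_consistent:
  assumes FZ: "(F,Z) \<in> polytopeQ FM FR FC" and j: "j \<in> {1..m}" and k: "1 \<le> k" "k < dg j - 2"
  shows "(\<Sum>G\<in>{G\<in>local_code FM FC (j,k). G (Inr (j,k)) = x}. Z (j,k) G)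
       = (\<Sum>G\<in>{G\<in>local_code FM FC (j,Suc k). G (Inr (j,k)) = x}. Z (j,Suc k) G)"
proof -
  let ?\<mu> = "\<lambda>k' x. \<Sum>G\<in>{G\<in>local_code FM FC (j,k'). G (Inr (j,k)) = x}. Z (j,k') G"
  have rows: "(j,k) \<in> FR" "(j,Suc k) \<in> FR" using j k F_rows_iff by auto
  have supp: "Inr (j,k) \<in> row_supp FM FC (j,k)" "Inr (j,k) \<in> row_supp FM FC (j,Suc k)"
    using row_supp_F[OF j, of k] row_supp_F[OF j, of "Suc k"] k by auto
  have nonzero: "?\<mu> k a = ?\<mu> (Suc k) a" if "a \<noteq> 0" for a
    using polytopeQ_memD(4)[OF FZ rows(1) supp(1) that] polytopeQ_memD(4)[OF FZ rows(2) supp(2) that]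
    by simp
  have total: "?\<mu> k' 0 = 1 - (\<Sum>a\<in>UNIV-{0}. ?\<mu> k' a)" if "(j,k') \<in> FR" for k'
    by (rule sum_fiber_zero) (use polytopeQ_memD(3)[OF FZ that] finite_local_code_F in auto)
  show ?thesis
  proof (cases "x = 0")
    case True
    then show ?thesis using total[OF rows(1)] total[OF rows(2)] nonzero by simp
  qed (rule nonzero)
qed

definition row_of :: "nat \<Rightarrow> nat \<Rightarrow> nat" where
  "row_of j t = (if t \<le> 2 then 1 else if t \<ge> dg j - 1 then dg j - 2 else t - 1)"

definition assemble :: "nat \<Rightarrow> (nat \<Rightarrow> nat + nat \<times> nat \<Rightarrow> 'r) \<Rightarrow> nat \<Rightarrow> 'r" where
  "assemble j s i = (if i \<in> Iset H n j then s (row_of j (the_inv_into {1..dg j} (pos j) i)) (Inl i) else 0)"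

lemma row_of_cpos:
  assumes j: "j \<in> {1..m}" and t: "t \<in> {1..dg j}"
  shows "row_of j t \<in> {1..dg j - 2}" "pos j t \<in> cpos j (row_of j t)"
proof -
  have d: "dg j \<ge> 4" by (rule dg_ge_4[OF j])
  have "1 \<le> t" "t \<le> dg j" using t by auto
  then consider "t = 1" | "t = 2" | "t = dg j - 1" | "t = dg j" | "3 \<le> t" "t \<le> dg j - 2" by linarith
  then have "row_of j t \<in> {1..dg j - 2} \<and> pos j t \<in> cpos j (row_of j t)"
    by cases (use d in \<open>auto simp: row_of_def F_cpos_def\<close>)
  then show "row_of j t \<in> {1..dg j - 2}" "pos j t \<in> cpos j (row_of j t)" by auto
qed

lemma assemble_pos:
  assumes j: "j \<in> {1..m}" and t: "t \<in> {1..dg j}"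
  shows "assemble j s (pos j t) = s (row_of j t) (Inl (pos j t))"
proof -
  have "inj_on (pos j) {1..dg j}" using pos_bij j bij_betw_def by blast
  then show ?thesis unfolding assemble_def using the_inv_into_f_f[of "pos j", OF _ t] pos_in_Iset[OF j t] by simp
qed

lemma assemble_eq_row:
  assumes j: "j \<in> {1..m}" and i: "i \<in> Iset H n j"
  obtains k where "(j,k) \<in> FR" "Inl i \<in> row_supp FM FC (j,k)" "\<And>s. assemble j s i = s k (Inl i)"
proof -
  have "i \<in> pos j ` {1..dg j}" using pos_bij j i by (simp add: bij_betw_def)
  then obtain t where t: "t \<in> {1..dg j}" "i = pos j t" by blast
  have "(j, row_of j t) \<in> FR" using row_of_cpos[OF j t(1)] j F_rows_iff by auto
  moreover have "Inl i \<in> row_supp FM FC (j, row_of j t)"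
    using row_of_cpos[OF j t(1)] row_supp_F[OF j] t(2) by auto
  ultimately show ?thesis using that[of "row_of j t"] assemble_pos[OF j t(1)] t(2) by simp
qed

lemma row_chains_link:
  "s \<in> row_chains j N \<Longrightarrow> 1 \<le> k \<Longrightarrow> k < N \<Longrightarrow> s (Suc k) (Inr (j,k)) = s k (Inr (j,k))"
  unfolding chains_def by simp

text \<open>Summing the row equations of check \<open>j\<close> along a chain, the auxiliary symbols telescope
  away and what is left is the check equation of \<open>H\<close>.\<close>
lemma assemble_in_local_code:
  assumes j: "j \<in> {1..m}" and s: "s \<in> row_chains j (dg j - 2)"
  shows "assemble j s \<in> local_code H {1..n} j"
proof -
  define d where "d = dg j"
  have d: "d \<ge> 4" unfolding d_def by (rule dg_ge_4[OF j])
  define x where "x k = s k (Inr (j,k))" for k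
  have row: "(\<Sum>i\<in>cpos j k. s k (Inl i) * H j i)
      = - ((if k \<le> d - 3 then x k else 0) - (if 2 \<le> k then x (k-1) else 0))"
    if k: "k \<in> {1..d - 2}" for k
  proof -
    have k': "1 \<le> k" "k \<le> dg j - 2" using k unfolding d_def by auto
    have "(\<Sum>c\<in>row_supp FM FC (j,k). s k c * FM (j,k) c) = 0"
      using s k unfolding chains_def local_code_def d_def by blast
    moreover have "s k (Inr (j,k-1)) = x (k-1)" if "2 \<le> k"
      using row_chains_link[OF s, of "k-1"] that k unfolding x_def d_def by simp
    ultimately show ?thesis unfolding F_row_sum[OF j k'] x_def d_def
      by (auto simp: algebra_simps eq_neg_iff_add_eq_0)
  qed
  let ?a = "\<lambda>t. s (row_of j t) (Inl (pos j t)) * H j (pos j t)"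
  have "(\<Sum>i\<in>Iset H n j. assemble j s i * H j i) = (\<Sum>t\<in>{1..d}. ?a t)"
    using sum.reindex_bij_betw[of "pos j" "{1..d}" "Iset H n j" "\<lambda>i. assemble j s i * H j i"] pos_bij j
    unfolding d_def by (simp add: assemble_pos[OF j])
  also have "\<dots> = (\<Sum>k\<in>{1..d-2}. (if k = 1 then ?a 1 + ?a 2 else if k = d-2 then ?a (d-1) + ?a d else ?a (k+1)))"
    by (rule sum_regroup_ends[OF d, symmetric])
  also have "\<dots> = (\<Sum>k\<in>{1..d-2}. \<Sum>i\<in>cpos j k. s k (Inl i) * H j i)"
  proof (rule sum.cong[OF refl])
    fix k assume k: "k \<in> {1..d-2}"
    then have k': "1 \<le> k" "k \<le> dg j - 2" unfolding d_def by auto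
    have "row_of j 1 = 1" "row_of j 2 = 1" "row_of j (d-1) = d-2" "row_of j d = d-2"
      "k \<noteq> 1 \<Longrightarrow> k \<noteq> d - 2 \<Longrightarrow> row_of j (k+1) = k"
      using d k unfolding row_of_def d_def by auto
    then show "(if k = 1 then ?a 1 + ?a 2 else if k = d-2 then ?a (d-1) + ?a d else ?a (k+1))
        = (\<Sum>i\<in>cpos j k. s k (Inl i) * H j i)"
      unfolding sum_cpos[OF j k'] d_def by auto
  qed
  also have "\<dots> = - (\<Sum>k\<in>{1..d-2}. (if k \<le> d - 3 then x k else 0) - (if 2 \<le> k then x (k-1) else 0))"
    unfolding sum_negf[symmetric] by (intro sum.cong refl) (simp add: row)
  also have "\<dots> = 0" using sum_telescoping_links[OF d, of x] by simp
  finally show ?thesis unfolding local_code_def row_supp_H assemble_def by auto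
qed

lemma check_distribution_from_rows:
  assumes FZ: "(F,Z) \<in> polytopeQ FM FR FC" and j: "j \<in> {1..m}"
  shows "\<exists>wj. (\<forall>g\<in>local_code H {1..n} j. wj g \<ge> 0) \<and> (\<Sum>g\<in>local_code H {1..n} j. wj g) = 1 \<and>
     (\<forall>i\<in>Iset H n j. \<forall>\<alpha>. \<alpha> \<noteq> 0 \<longrightarrow> F (Inl i) \<alpha> = (\<Sum>g\<in>{g\<in>local_code H {1..n} j. g i = \<alpha>}. wj g))"
proof -
  let ?B = "\<lambda>k. local_code FM FC (j,k)" and ?N = "dg j - 2" and ?LC = "local_code H {1..n} j"
  have rows: "(j,k) \<in> FR" if "k \<in> {1..?N}" for k using that j F_rows_iff by auto
  have fin: "\<forall>k. finite (?B k)" using finite_local_code_F by blast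
  have nonneg: "\<forall>k\<in>{1..?N}. \<forall>G\<in>?B k. Z (j,k) G \<ge> 0"
    and total: "\<forall>k\<in>{1..?N}. sum (Z (j,k)) (?B k) = 1"
    using polytopeQ_memD(2,3)[OF FZ] rows by auto
  have consistent: "(\<Sum>G\<in>{G\<in>?B k. G (Inr (j,k)) = x}. Z (j,k) G)
      = (\<Sum>G\<in>{G\<in>?B (Suc k). G (Inr (j, Suc k - 1)) = x}. Z (j,Suc k) G)"
    if "1 \<le> k" "k < ?N" for k x
    using row_marginals_consistent[OF FZ j that] by simp
  have "1 \<le> ?N" using dg_ge_4[OF j] by simp
  then obtain \<pi> where
    \<pi>: "chain_coupling ?B (\<lambda>k G. G (Inr (j, k - 1))) (\<lambda>k G. G (Inr (j, k))) (\<lambda>k. Z (j,k)) ?N \<pi>"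
    using chain_coupling_exists[where L="\<lambda>k G. G (Inr (j, k - 1))" and R="\<lambda>k G. G (Inr (j, k))"
        and \<nu>="\<lambda>k. Z (j,k)", OF fin nonneg total consistent] by blast
  let ?T = "row_chains j ?N"
  have finT: "finite ?T" by (rule finite_chains[OF fin])
  define wj where "wj g = (\<Sum>s\<in>{s\<in>?T. assemble j s = g}. \<pi> s)" for g
  have sum_wj: "(\<Sum>g\<in>{g\<in>?LC. P g}. wj g) = (\<Sum>s\<in>{s\<in>?T. P (assemble j s)}. \<pi> s)" for P
    unfolding wj_def
    by (rule sum_fibers_filter) (use finT finite_local_code_H assemble_in_local_code[OF j] in auto)
  have "\<forall>g\<in>?LC. wj g \<ge> 0" using \<pi> unfolding wj_def chain_coupling_def by (auto intro!: sum_nonneg)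
  moreover have "(\<Sum>g\<in>?LC. wj g) = 1" using sum_wj[of "\<lambda>_. True"] \<pi> unfolding chain_coupling_def by simp
  moreover have "F (Inl i) \<alpha> = (\<Sum>g\<in>{g\<in>?LC. g i = \<alpha>}. wj g)" if i: "i \<in> Iset H n j" and \<alpha>: "\<alpha> \<noteq> 0" for i \<alpha>
  proof -
    obtain k where k: "(j,k) \<in> FR" "Inl i \<in> row_supp FM FC (j,k)" and asm: "\<And>s. assemble j s i = s k (Inl i)"
      using assemble_eq_row[OF j i] by blast
    have kN: "k \<in> {1..?N}" using k(1) F_rows_iff by auto
    let ?ind = "\<lambda>G. if G (Inl i) = \<alpha> then 1 else 0 :: real"
    have "(\<Sum>g\<in>{g\<in>?LC. g i = \<alpha>}. wj g) = (\<Sum>s\<in>{s\<in>?T. s k (Inl i) = \<alpha>}. \<pi> s)"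
      unfolding sum_wj asm ..
    also have "\<dots> = (\<Sum>s\<in>?T. \<pi> s * ?ind (s k))" by (rule sum_mult_indicator[OF finT, symmetric])
    also have "\<dots> = (\<Sum>G\<in>?B k. Z (j,k) G * ?ind G)" by (rule chain_coupling_marginal[OF \<pi> kN])
    also have "\<dots> = F (Inl i) \<alpha>"
      using polytopeQ_memD(4)[OF FZ k \<alpha>] fin by (simp add: sum_mult_indicator)
    finally show ?thesis ..
  qed
  ultimately show ?thesis by blast
qed

lemma projection_polytopeQ_F:
  assumes FZ: "(F,Z) \<in> polytopeQ FM FR FC"
  shows "\<exists>w. ((\<lambda>i \<alpha>. F (Inl i) \<alpha>), w) \<in> polytopeQ H {1..m} {1..n}"
proof -
  have "\<forall>j\<in>{1..m}. \<exists>wj. (\<forall>g\<in>local_code H {1..n} j. wj g \<ge> 0) \<and> (\<Sum>g\<in>local_code H {1..n} j. wj g) = 1 \<and>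
     (\<forall>i\<in>Iset H n j. \<forall>\<alpha>. \<alpha> \<noteq> 0 \<longrightarrow> F (Inl i) \<alpha> = (\<Sum>g\<in>{g\<in>local_code H {1..n} j. g i = \<alpha>}. wj g))"
    (is "\<forall>j\<in>_. \<exists>wj. ?P j wj")
    using check_distribution_from_rows[OF FZ] by blast
  then obtain W where W: "\<forall>j\<in>{1..m}. ?P j (W j)" by (rule bchoice[elim_format]) blast
  define w where "w j g = (if j \<in> {1..m} \<and> g \<in> local_code H {1..n} j then W j g else 0)" for j g
  have w_W: "(\<Sum>g\<in>{g \<in> local_code H {1..n} j. P g}. w j g) = (\<Sum>g\<in>{g \<in> local_code H {1..n} j. P g}. W j g)"
    if "j \<in> {1..m}" for j P
    unfolding w_def using that by (intro sum.cong refl) auto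
  have "((\<lambda>i \<alpha>. F (Inl i) \<alpha>), w) \<in> polytopeQ H {1..m} {1..n}"
  proof (rule polytopeQ_memI)
    show "F (Inl i) \<alpha> = 0" if "i \<notin> {1..n} \<or> \<alpha> = 0" for i \<alpha>
      using polytopeQ_memD(1)[OF FZ] Inl_in_F_cols that by blast
    show "w j g = 0" if "j \<notin> {1..m} \<or> g \<notin> local_code H {1..n} j" for j g
      using that unfolding w_def by auto
    show "w j g \<ge> 0" if "j \<in> {1..m}" "g \<in> local_code H {1..n} j" for j g
      using W that unfolding w_def by simp
    show "(\<Sum>g\<in>local_code H {1..n} j. w j g) = 1" if "j \<in> {1..m}" for j
      using W w_W[OF that, of "\<lambda>_. True"] that by simp
    show "F (Inl i) \<alpha> = (\<Sum>g\<in>{g \<in> local_code H {1..n} j. g i = \<alpha>}. w j g)"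
      if "j \<in> {1..m}" "i \<in> row_supp H {1..n} j" "\<alpha> \<noteq> 0" for j i \<alpha>
      using W w_W that unfolding row_supp_H by simp
  qed
  then show ?thesis by blast
qed

lemma projection_polytopeQ_F_eq:
  "{(\<lambda>i \<alpha>. F (Inl i) \<alpha>) | F Z. (F, Z) \<in> polytopeQ FM FR FC} = {f. \<exists>w. (f, w) \<in> polytopeQ H {1..m} {1..n}}"
proof (intro equalityI subsetI)
  fix f assume "f \<in> {(\<lambda>i \<alpha>. F (Inl i) \<alpha>) | F Z. (F, Z) \<in> polytopeQ FM FR FC}"
  then obtain F Z where "f = (\<lambda>i \<alpha>. F (Inl i) \<alpha>)" "(F, Z) \<in> polytopeQ FM FR FC" by blast
  then show "f \<in> {f. \<exists>w. (f, w) \<in> polytopeQ H {1..m} {1..n}}" using projection_polytopeQ_F by simp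
next
  fix f assume "f \<in> {f. \<exists>w. (f, w) \<in> polytopeQ H {1..m} {1..n}}"
  then obtain w where fw: "(f, w) \<in> polytopeQ H {1..m} {1..n}" by blast
  have "f = (\<lambda>i \<alpha>. lifted_F f w (Inl i) \<alpha>)" unfolding lifted_F_def by simp
  then show "f \<in> {(\<lambda>i \<alpha>. F (Inl i) \<alpha>) | F Z. (F, Z) \<in> polytopeQ FM FR FC}"
    using lifted_in_polytopeQ[OF fw] by (intro CollectI exI conjI)
qed

end

theorem theorem6:
  fixes H :: "nat \<Rightarrow> nat \<Rightarrow> 'r::{ring_1, finite}"
    and m n :: nat
    and pos :: "nat \<Rightarrow> nat \<Rightarrow> nat"
  assumes deg4: "\<forall>j\<in>{1..m}. deg H n j \<ge> 4"
    and order: "\<forall>j\<in>{1..m}. bij_betw (pos j) {1..deg H n j} (Iset H n j)"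
  shows "{(\<lambda>i \<alpha>. F (Inl i) \<alpha>) | F Z. (F, Z) \<in> polytopeQ (F_mat H m n pos) (F_rows H m n) (F_cols H m n)}
           = {f. \<exists>w. (f, w) \<in> polytopeQ H {1..m} {1..n}}
       \<and> (\<forall>\<Lambda> :: nat \<Rightarrow> 'r \<Rightarrow> real.
           {(\<Sum>i\<in>{1..n}. \<Sum>\<alpha>\<in>UNIV - {0}. \<Lambda> i \<alpha> * F (Inl i) \<alpha>) | F Z.
               (F, Z) \<in> polytopeQ (F_mat H m n pos) (F_rows H m n) (F_cols H m n)}
         = {(\<Sum>i\<in>{1..n}. \<Sum>\<alpha>\<in>UNIV - {0}. \<Lambda> i \<alpha> * f i \<alpha>) | f w.
               (f, w) \<in> polytopeQ H {1..m} {1..n}})"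
proof -
  interpret check_splitting H m n pos using deg4 order by unfold_locales
  let ?S = "polytopeQ (F_mat H m n pos) (F_rows H m n) (F_cols H m n)"
  have eq: "{(\<lambda>i \<alpha>. F (Inl i) \<alpha>) | F Z. (F, Z) \<in> ?S} = {f. \<exists>w. (f, w) \<in> polytopeQ H {1..m} {1..n}}"
    by (rule projection_polytopeQ_F_eq)
  show ?thesis
  proof (intro conjI allI)
    fix \<Lambda> :: "nat \<Rightarrow> 'r \<Rightarrow> real"
    show "{(\<Sum>i\<in>{1..n}. \<Sum>\<alpha>\<in>UNIV - {0}. \<Lambda> i \<alpha> * F (Inl i) \<alpha>) | F Z. (F, Z) \<in> ?S}
        = {(\<Sum>i\<in>{1..n}. \<Sum>\<alpha>\<in>UNIV - {0}. \<Lambda> i \<alpha> * f i \<alpha>) | f w. (f, w) \<in> polytopeQ H {1..m} {1..n}}"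
      by (rule setcompr_comp_eq[OF eq, where c="\<lambda>f. \<Sum>i\<in>{1..n}. \<Sum>\<alpha>\<in>UNIV - {0}. \<Lambda> i \<alpha> * f i \<alpha>"])
  qed (fact eq)
qed

end
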